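(* Let $\beta_1>0$, $\beta_2>0$ and $\beta_3\ge 0$ be real constants, and consider the linear system of partial differential equations for unknowns $p(x,t)$, $u(x,t)$, $x\in\mathbb{R}$, $t\ge 0$: \[ p_t + \beta_1 u_x - \beta_2\, \partial_t^3 p + \beta_3\, \partial_t^5 p = 0, \qquad u_t + p_x = 0 . \] Call a pair $(k,\omega)\in\mathbb{R}\times\mathbb{C}$ admissible if there exist constants $(\hat p,\hat u)\in\mathbb{C}^2\setminus\{(0,0)\}$ such that $p=\hat p\,e^{i(kx-\omega t)}$, $u=\hat u\,e^{i(kx-\omega t)}$ solves the system; equivalently, $\omega^2+\beta_2\omega^4+\beta_3\omega^6-\beta_1k^2=0$. Then: (i) for every $k\in\mathbb{R}$ there exists $\omega\in\mathbb{C}$ with $\operatorname{Im}\omega>0$ such that $(k,\omega)$ is admissible, i.e.\ the system is linearly unstable at every wavenumber (the corresponding plane wave grows exponentially in time); (ii) such $\omega=\omega(k)$ can be chosen so that $\operatorname{Im}\omega(k)\to+\infty$ as $|k|\to\infty$, so the initial value problem for the system is ill-posed.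
   Context: A plane wave $\hat p\,e^{i(kx-\omega t)}$ with $\operatorname{Im}\omega>0$ grows like $e^{(\operatorname{Im}\omega) t}$; unbounded growth rates as $|k|\to\infty$ mean the initial value problem is not well-posed in the sense of Hadamard. The case $\beta_3=0$ is included. *)

theory Defs
  imports "HOL-Analysis.Analysis"
begin

definition dtn :: "nat \<Rightarrow> (real \<Rightarrow> real \<Rightarrow> complex) \<Rightarrow> real \<Rightarrow> real \<Rightarrow> complex" where
  "dtn n f x t = ((\<lambda>g s. vector_derivative g (at s)) ^^ n) (\<lambda>s. f x s) t"

definition dx :: "(real \<Rightarrow> real \<Rightarrow> complex) \<Rightarrow> real \<Rightarrow> real \<Rightarrow> complex" where
  "dx f x t = vector_derivative (\<lambda>y. f y t) (at x)"

definition plane_wave :: "complex \<Rightarrow> real \<Rightarrow> complex \<Rightarrow> real \<Rightarrow> real \<Rightarrow> complex" where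
  "plane_wave a k \<omega> x t = a * exp (\<i> * (complex_of_real k * complex_of_real x - \<omega> * complex_of_real t))"

definition solves_system :: "real \<Rightarrow> real \<Rightarrow> real \<Rightarrow> (real \<Rightarrow> real \<Rightarrow> complex) \<Rightarrow> (real \<Rightarrow> real \<Rightarrow> complex) \<Rightarrow> bool" where
  "solves_system b1 b2 b3 p u \<longleftrightarrow>
     (\<forall>x t. t \<ge> 0 \<longrightarrow>
        dtn 1 p x t + complex_of_real b1 * dx u x t - complex_of_real b2 * dtn 3 p x t
          + complex_of_real b3 * dtn 5 p x t = 0
      \<and> dtn 1 u x t + dx p x t = 0)"

definition admissible :: "real \<Rightarrow> real \<Rightarrow> real \<Rightarrow> real \<Rightarrow> complex \<Rightarrow> bool" where
  "admissible b1 b2 b3 k \<omega> \<longleftrightarrow>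
     (\<exists>ph uh. (ph, uh) \<noteq> (0, 0) \<and>
        solves_system b1 b2 b3 (plane_wave ph k \<omega>) (plane_wave uh k \<omega>))"

end

theory Submission imports Defs begin

text \<open>Substituting a plane wave turns the system into the dispersion relation, which is a cubic
  equation for \<open>z = \<omega>\<^sup>2\<close> with nonnegative coefficients and right-hand side \<open>b1 k\<^sup>2 \<ge> 0\<close>.
  Such a cubic always has a root with \<open>Re z < 0\<close> (a negative real root if \<open>b3 = 0\<close>, otherwise a
  root of the quadratic factor left after splitting off the nonnegative real root), and a square
  root of it in the upper half plane is an unstable frequency. Since \<open>Re z < 0\<close> forces
  \<open>\<bar>z\<bar> < 2 (Im \<omega>)\<^sup>2\<close>, the dispersion relation bounds \<open>b1 k\<^sup>2\<close> by a polynomial in \<open>Im \<omega>\<close>, so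
  \<open>Im \<omega>\<close> must grow without bound as \<open>\<bar>k\<bar> \<rightarrow> \<infinity>\<close>.\<close>

definition dispersion_relation :: "real \<Rightarrow> real \<Rightarrow> real \<Rightarrow> real \<Rightarrow> complex \<Rightarrow> bool" where
  "dispersion_relation b1 b2 b3 k \<omega> \<longleftrightarrow>
     \<omega>\<^sup>2 + of_real b2 * \<omega> ^ 4 + of_real b3 * \<omega> ^ 6 = of_real (b1 * k\<^sup>2)"

lemma plane_wave_has_vector_derivative_time:
  "((\<lambda>s. plane_wave a k \<omega> x s) has_vector_derivative (- \<i> * \<omega>) * plane_wave a k \<omega> x t) (at t)"
proof -
  have "((\<lambda>s::complex. a * exp (\<i> * (of_real k * of_real x - \<omega> * s))) has_field_derivative
        (- \<i> * \<omega>) * (a * exp (\<i> * (of_real k * of_real x - \<omega> * of_real t)))) (at (of_real t))"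
    by (auto intro!: derivative_eq_intros simp: algebra_simps)
  from has_vector_derivative_real_field[OF this] show ?thesis
    by (simp add: plane_wave_def)
qed

lemma plane_wave_has_vector_derivative_space:
  "((\<lambda>y. plane_wave a k \<omega> y t) has_vector_derivative (\<i> * of_real k) * plane_wave a k \<omega> x t) (at x)"
proof -
  have "((\<lambda>y::complex. a * exp (\<i> * (of_real k * y - \<omega> * of_real t))) has_field_derivative
        (\<i> * of_real k) * (a * exp (\<i> * (of_real k * of_real x - \<omega> * of_real t)))) (at (of_real x))"
    by (auto intro!: derivative_eq_intros simp: algebra_simps)
  from has_vector_derivative_real_field[OF this] show ?thesis
    by (simp add: plane_wave_def)
qed

lemma mult_plane_wave: "c * plane_wave a k \<omega> x t = plane_wave (c * a) k \<omega> x t"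
  by (simp add: plane_wave_def)

lemma funpow_vector_derivative_plane_wave:
  "((\<lambda>g s. vector_derivative g (at s)) ^^ n) (\<lambda>s. plane_wave a k \<omega> x s)
     = (\<lambda>s. (- \<i> * \<omega>) ^ n * plane_wave a k \<omega> x s)"
proof (induction n)
  case 0
  then show ?case by simp
next
  case (Suc n)
  have "vector_derivative (\<lambda>s. plane_wave ((- \<i> * \<omega>) ^ n * a) k \<omega> x s) (at t)
          = (- \<i> * \<omega>) ^ Suc n * plane_wave a k \<omega> x t" for t
    by (subst vector_derivative_at[OF plane_wave_has_vector_derivative_time]) (simp add: plane_wave_def)
  then show ?case
    by (simp add: Suc mult_plane_wave)
qed

lemma dtn_plane_wave: "dtn n (plane_wave a k \<omega>) x t = (- \<i> * \<omega>) ^ n * plane_wave a k \<omega> x t"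
  by (simp add: dtn_def funpow_vector_derivative_plane_wave)

lemma dx_plane_wave: "dx (plane_wave a k \<omega>) x t = (\<i> * of_real k) * plane_wave a k \<omega> x t"
  unfolding dx_def by (rule vector_derivative_at[OF plane_wave_has_vector_derivative_space])

text \<open>The amplitudes \<open>(1, k/\<omega>)\<close> solve the second equation; the first then reduces to the
  dispersion relation times \<open>-\<i>/\<omega>\<close>.\<close>

lemma admissible_if_dispersion_relation:
  assumes "\<omega> \<noteq> 0" and "dispersion_relation b1 b2 b3 k \<omega>"
  shows "admissible b1 b2 b3 k \<omega>"
  unfolding admissible_def
proof (intro exI conjI)
  show "(1::complex, of_real k / \<omega>) \<noteq> (0, 0)" by simp
  show "solves_system b1 b2 b3 (plane_wave 1 k \<omega>) (plane_wave (of_real k / \<omega>) k \<omega>)"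
    unfolding solves_system_def
  proof (intro allI impI conjI)
    fix x t :: real
    let ?E = "plane_wave 1 k \<omega> x t"
    have amplitude: "plane_wave (of_real k / \<omega>) k \<omega> x t = (of_real k / \<omega>) * ?E"
      by (simp add: plane_wave_def)
    have "dtn 1 (plane_wave 1 k \<omega>) x t + of_real b1 * dx (plane_wave (of_real k / \<omega>) k \<omega>) x t
        - of_real b2 * dtn 3 (plane_wave 1 k \<omega>) x t + of_real b3 * dtn 5 (plane_wave 1 k \<omega>) x t
      = (- \<i> * \<omega> + of_real b1 * (\<i> * of_real k) * (of_real k / \<omega>)
          - of_real b2 * (- \<i> * \<omega>) ^ 3 + of_real b3 * (- \<i> * \<omega>) ^ 5) * ?E"
      unfolding dtn_plane_wave dx_plane_wave amplitude by (simp add: algebra_simps)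
    also have "\<dots> = (- \<i> / \<omega>)
        * (\<omega>\<^sup>2 + of_real b2 * \<omega> ^ 4 + of_real b3 * \<omega> ^ 6 - of_real (b1 * k\<^sup>2)) * ?E"
      using assms(1) by (simp add: field_simps power2_eq_square eval_nat_numeral)
    also have "\<dots> = 0"
      using assms(2) by (simp add: dispersion_relation_def)
    finally show "dtn 1 (plane_wave 1 k \<omega>) x t + of_real b1 * dx (plane_wave (of_real k / \<omega>) k \<omega>) x t
        - of_real b2 * dtn 3 (plane_wave 1 k \<omega>) x t + of_real b3 * dtn 5 (plane_wave 1 k \<omega>) x t = 0" .
    show "dtn 1 (plane_wave (of_real k / \<omega>) k \<omega>) x t + dx (plane_wave 1 k \<omega>) x t = 0"
      unfolding dtn_plane_wave dx_plane_wave amplitude using assms(1) by (simp add: field_simps)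
  qed
qed

lemma quadratic_root_Re_neg:
  fixes a d :: real
  assumes "a > 0"
  shows "\<exists>z::complex. Re z < 0 \<and> z\<^sup>2 + of_real a * z + of_real d = 0"
proof -
  define q where "q = csqrt (of_real (a\<^sup>2 / 4 - d))"
  have "q\<^sup>2 = of_real (a\<^sup>2 / 4 - d)"
    by (simp add: q_def)
  then have "(- of_real a / 2 - q)\<^sup>2 + of_real a * (- of_real a / 2 - q) + of_real d = 0"
    by (simp add: algebra_simps power2_eq_square)
  moreover have "Re q \<ge> 0"
    using csqrt_principal[of "of_real (a\<^sup>2 / 4 - d)"] by (auto simp: q_def)
  then have "Re (- of_real a / 2 - q) < 0"
    using assms by simp
  ultimately show ?thesis by blast
qed

lemma cubic_root_Re_neg:
  fixes b2 b3 c :: real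
  assumes b2: "b2 > 0" and b3: "b3 \<ge> 0" and c: "c \<ge> 0"
  shows "\<exists>z::complex. Re z < 0 \<and> of_real b3 * z ^ 3 + of_real b2 * z\<^sup>2 + z = of_real c"
proof (cases "b3 = 0")
  case True
  obtain z :: complex where "Re z < 0" and "z\<^sup>2 + of_real (1 / b2) * z + of_real (- c / b2) = 0"
    using quadratic_root_Re_neg[of "1 / b2" "- c / b2"] b2 by auto
  moreover have "of_real b2 * z\<^sup>2 + z - of_real c
      = of_real b2 * (z\<^sup>2 + of_real (1 / b2) * z + of_real (- c / b2))"
    using b2 by (simp add: field_simps)
  ultimately have "of_real b2 * z\<^sup>2 + z = of_real c"
    by simp
  with \<open>Re z < 0\<close> True show ?thesis by auto
next
  case False
  then have "b3 > 0" using b3 by simp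
  obtain r where "0 \<le> r" and r: "b3 * r ^ 3 + b2 * r\<^sup>2 + r = c"
    using IVT'[of "\<lambda>r. b3 * r ^ 3 + b2 * r\<^sup>2 + r" 0 c c] b2 b3 c
    by (force intro: continuous_intros)
  define a where "a = r + b2 / b3"
  define d where "d = a * r + 1 / b3"
  have "a > 0"
    unfolding a_def using \<open>0 \<le> r\<close> b2 \<open>b3 > 0\<close> by (simp add: add_nonneg_pos)
  then obtain z :: complex where "Re z < 0" and quadratic: "z\<^sup>2 + of_real a * z + of_real d = 0"
    using quadratic_root_Re_neg by blast
  have coeffs: "b2 = b3 * (a - r)" "1 = b3 * (d - a * r)" "c = b3 * r * d"
    using \<open>b3 > 0\<close> r by (simp_all add: a_def d_def field_simps power2_eq_square power3_eq_cube)
  have "of_real b3 * z ^ 3 + of_real b2 * z\<^sup>2 + z - of_real c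
      = of_real b3 * z ^ 3 + of_real (b3 * (a - r)) * z\<^sup>2 + of_real (b3 * (d - a * r)) * z
        - of_real (b3 * r * d)"
    using coeffs by simp
  also have "\<dots> = of_real b3 * (z - of_real r) * (z\<^sup>2 + of_real a * z + of_real d)"
    by (simp add: algebra_simps power2_eq_square power3_eq_cube)
  finally have "of_real b3 * z ^ 3 + of_real b2 * z\<^sup>2 + z - of_real c
      = of_real b3 * (z - of_real r) * (z\<^sup>2 + of_real a * z + of_real d)" .
  with quadratic \<open>Re z < 0\<close> show ?thesis by auto
qed

lemma square_root_upper_half_plane:
  fixes z :: complex
  assumes "Re z < 0"
  shows "\<exists>\<omega>. \<omega>\<^sup>2 = z \<and> Im \<omega> > 0"
proof -
  define v where "v = csqrt (- z)"
  have "(\<i> * v)\<^sup>2 = z"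
    by (simp add: v_def power_mult_distrib)
  moreover have "Re v \<noteq> 0"
  proof
    assume "Re v = 0"
    then have "Re (- z) = - (Im v)\<^sup>2"
      by (metis Re_power2 power2_csqrt diff_0 zero_power2 v_def)
    with assms show False by simp
  qed
  then have "Im (\<i> * v) > 0"
    using csqrt_principal[of "- z"] by (auto simp: v_def)
  ultimately show ?thesis by blast
qed

lemma unstable_dispersion_root:
  assumes "b1 \<ge> 0" and "b2 > 0" and "b3 \<ge> 0"
  shows "\<exists>\<omega>. 0 < Im \<omega> \<and> Re (\<omega>\<^sup>2) < 0 \<and> dispersion_relation b1 b2 b3 k \<omega>"
proof -
  obtain z where "Re z < 0" and cubic: "of_real b3 * z ^ 3 + of_real b2 * z\<^sup>2 + z = of_real (b1 * k\<^sup>2)"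
    using cubic_root_Re_neg[OF assms(2,3), of "b1 * k\<^sup>2"] assms(1) by auto
  moreover obtain \<omega> where "\<omega>\<^sup>2 = z" and "0 < Im \<omega>"
    using square_root_upper_half_plane[OF \<open>Re z < 0\<close>] by blast
  moreover have "dispersion_relation b1 b2 b3 k \<omega>"
    using cubic unfolding dispersion_relation_def \<open>\<omega>\<^sup>2 = z\<close>[symmetric]
    by (simp add: algebra_simps flip: power_mult)
  ultimately show ?thesis by blast
qed

lemma norm_power2_lt_Im:
  fixes \<omega> :: complex
  assumes "Re (\<omega>\<^sup>2) < 0"
  shows "norm (\<omega>\<^sup>2) < 2 * (Im \<omega>)\<^sup>2"
  using assms by (simp add: norm_power cmod_power2 Re_power2)

lemma norm_cubic_le:
  fixes b2 b3 :: real and z :: complex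
  assumes "b2 \<ge> 0" and "b3 \<ge> 0"
  shows "norm (of_real b3 * z ^ 3 + of_real b2 * z\<^sup>2 + z) \<le> b3 * norm z ^ 3 + b2 * norm z ^ 2 + norm z"
  using assms
  by (auto intro!: order_trans[OF norm_triangle_ineq] add_mono simp: norm_mult norm_power)

lemma filterlim_at_top_at_infinity_if_bounded_sublevels:
  fixes f :: "'a::real_normed_vector \<Rightarrow> real"
  assumes "\<And>M. bounded {x. f x \<le> M}"
  shows "filterlim f at_top at_infinity"
  unfolding filterlim_at_top
proof
  fix M
  obtain B where "\<And>x. f x \<le> M \<Longrightarrow> norm x \<le> B"
    using assms[of M] unfolding bounded_iff by blast
  then have "M \<le> f x" if "B + 1 \<le> norm x" for x
    using that by (cases "f x \<le> M") force+
  then show "eventually (\<lambda>x. M \<le> f x) at_infinity"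
    unfolding eventually_at_infinity by blast
qed

lemma dispersion_relation_wavenumber_bound:
  assumes "b2 \<ge> 0" and "b3 \<ge> 0"
    and "dispersion_relation b1 b2 b3 k \<omega>" and "Re (\<omega>\<^sup>2) < 0" and "0 < Im \<omega>" and "Im \<omega> \<le> M"
  shows "\<bar>b1 * k\<^sup>2\<bar> \<le> b3 * (2 * M\<^sup>2) ^ 3 + b2 * (2 * M\<^sup>2)\<^sup>2 + 2 * M\<^sup>2"
proof -
  let ?z = "\<omega>\<^sup>2"
  have "(Im \<omega>)\<^sup>2 \<le> M\<^sup>2"
    using assms(5,6) by (simp add: power_mono)
  with norm_power2_lt_Im[OF assms(4)] have "norm ?z \<le> 2 * M\<^sup>2"
    by simp
  have "of_real b3 * ?z ^ 3 + of_real b2 * ?z\<^sup>2 + ?z = of_real (b1 * k\<^sup>2)"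
    using assms(3) by (simp add: dispersion_relation_def algebra_simps flip: power_mult)
  then have "\<bar>b1 * k\<^sup>2\<bar> = norm (of_real b3 * ?z ^ 3 + of_real b2 * ?z\<^sup>2 + ?z)"
    by (simp only: norm_of_real)
  also have "\<dots> \<le> b3 * norm ?z ^ 3 + b2 * norm ?z ^ 2 + norm ?z"
    using assms(1,2) by (rule norm_cubic_le)
  also have "\<dots> \<le> b3 * (2 * M\<^sup>2) ^ 3 + b2 * (2 * M\<^sup>2)\<^sup>2 + 2 * M\<^sup>2"
    using \<open>norm ?z \<le> 2 * M\<^sup>2\<close> assms(1,2) by (intro add_mono mult_left_mono power_mono) auto
  finally show ?thesis .
qed

lemma bounded_sublevels_of_unstable_branch:
  assumes "b1 > 0" and "b2 \<ge> 0" and "b3 \<ge> 0"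
    and "\<And>k. dispersion_relation b1 b2 b3 k (\<Omega> k)"
    and "\<And>k. Re ((\<Omega> k)\<^sup>2) < 0" and "\<And>k. 0 < Im (\<Omega> k)"
  shows "bounded {k. Im (\<Omega> k) \<le> M}"
proof -
  let ?Q = "b3 * (2 * M\<^sup>2) ^ 3 + b2 * (2 * M\<^sup>2)\<^sup>2 + 2 * M\<^sup>2"
  have "\<bar>k\<bar> \<le> sqrt (?Q / b1)" if "Im (\<Omega> k) \<le> M" for k
  proof -
    have "b1 * k\<^sup>2 \<le> ?Q"
      using dispersion_relation_wavenumber_bound[OF assms(2-6) that] by simp
    then have "\<bar>k\<bar>\<^sup>2 \<le> ?Q / b1"
      using assms(1) by (simp add: field_simps)
    then show ?thesis
      by (rule real_le_rsqrt)
  qed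
  then show ?thesis
    unfolding bounded_iff by auto
qed

theorem mainTheorem1:
  fixes b1 b2 b3 :: real
  assumes "b1 > 0" and "b2 > 0" and "b3 \<ge> 0"
  shows "(\<forall>k::real. \<exists>\<omega>. Im \<omega> > 0 \<and> admissible b1 b2 b3 k \<omega>)
       \<and> (\<exists>\<omega> :: real \<Rightarrow> complex.
            (\<forall>k. Im (\<omega> k) > 0 \<and> admissible b1 b2 b3 k (\<omega> k))
          \<and> filterlim (\<lambda>k. Im (\<omega> k)) at_top at_infinity)"
proof -
  obtain \<Omega> where \<Omega>: "\<And>k. 0 < Im (\<Omega> k)" "\<And>k. Re ((\<Omega> k)\<^sup>2) < 0"
      "\<And>k. dispersion_relation b1 b2 b3 k (\<Omega> k)"
    using unstable_dispersion_root assms by (metis less_imp_le)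
  have admissible: "admissible b1 b2 b3 k (\<Omega> k)" for k
    using \<Omega>(1,3)[of k] by (intro admissible_if_dispersion_relation) auto
  have "filterlim (\<lambda>k. Im (\<Omega> k)) at_top at_infinity"
    using bounded_sublevels_of_unstable_branch[OF assms(1) _ assms(3) \<Omega>(3,2,1)] assms(2)
    by (intro filterlim_at_top_at_infinity_if_bounded_sublevels) simp
  with \<Omega>(1) admissible show ?thesis
    by blast
qed

end
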